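(* Let $T\in B(H)$ satisfy $(T-t_N)^{k_N}(T-t_{N-1})^{k_{N-1}}\cdots(T-t_1)^{k_1}=0$, where $t_1,\ldots,t_N\in\mathbb C$ are pairwise distinct with $|t_1|\ge|t_2|\ge\cdots\ge|t_N|$ and $k_1,\ldots,k_N$ are positive integers. Define $R_m=\ker\big((T-t_m)^{k_m}\cdots(T-t_1)^{k_1}\big)$ for $0\le m\le N$ ($R_0=\{0\}$), $L_m=R_m\ominus R_{m-1}$ for $1\le m\le N$, and $M_m=H\ominus(L_1\oplus\cdots\oplus L_m)$. Then there exists $0\le m\le N$ such that, with respect to $H=L_1\oplus\cdots\oplus L_m\oplus M_m$, $$T=t_1 1_{L_1}\oplus\cdots\oplus t_m 1_{L_m}\oplus S,$$ where $S\in B(M_m)$ satisfies $(S-t_{m+1})^{k_{m+1}}\cdots(S-t_N)^{k_N}=0$ and $\|S\|>|t_i|$ for all $i\ge m+1$. *)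

theory Defs
  imports Complex_Main
begin

class complex_vector = real_vector +
  fixes scaleC :: "complex \<Rightarrow> 'a \<Rightarrow> 'a"
  assumes scaleC_add_right: "scaleC a (x + y) = scaleC a x + scaleC a y"
    and scaleC_add_left: "scaleC (a + b) x = scaleC a x + scaleC b x"
    and scaleC_scaleC: "scaleC a (scaleC b x) = scaleC (a * b) x"
    and scaleC_one: "scaleC 1 x = x"
    and scaleR_scaleC: "scaleR r x = scaleC (complex_of_real r) x"

class complex_inner = complex_vector + real_normed_vector +
  fixes cinner :: "'a \<Rightarrow> 'a \<Rightarrow> complex"
  assumes cinner_commute: "cinner x y = cnj (cinner y x)"
    and cinner_add_left: "cinner (x + y) z = cinner x z + cinner y z"
    and cinner_scaleC_left: "cinner (scaleC r x) y = cnj r * cinner x y"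
    and cinner_ge_zero: "Im (cinner x x) = 0 \<and> 0 \<le> Re (cinner x x)"
    and cinner_eq_zero_iff: "cinner x x = 0 \<longleftrightarrow> x = 0"
    and norm_eq_sqrt_cinner: "norm x = sqrt (Re (cinner x x))"

class chilbert = complex_inner + complete_space

definition bounded_clinear :: "('a::complex_inner \<Rightarrow> 'b::complex_inner) \<Rightarrow> bool" where
  "bounded_clinear T \<longleftrightarrow>
     (\<forall>x y. T (x + y) = T x + T y) \<and> (\<forall>c x. T (scaleC c x) = scaleC c (T x)) \<and>
     (\<exists>K. \<forall>x. norm (T x) \<le> norm x * K)"

definition shp :: "('a::complex_vector \<Rightarrow> 'a) \<Rightarrow> complex \<Rightarrow> nat \<Rightarrow> 'a \<Rightarrow> 'a" where
  "shp T c n = ((\<lambda>x. T x - scaleC c x) ^^ n)"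

text \<open>Ordered product (composition) of factors (T - c)^n; the first list
element is the leftmost (outermost) factor.\<close>
fun prodop :: "('a::complex_vector \<Rightarrow> 'a) \<Rightarrow> (complex \<times> nat) list \<Rightarrow> 'a \<Rightarrow> 'a" where
  "prodop T [] = id"
| "prodop T ((c, n) # fs) = shp T c n \<circ> prodop T fs"

definition factors :: "(nat \<Rightarrow> complex) \<Rightarrow> (nat \<Rightarrow> nat) \<Rightarrow> nat list \<Rightarrow> (complex \<times> nat) list" where
  "factors t k is = map (\<lambda>i. (t i, k i)) is"

definition orth :: "'a::complex_inner set \<Rightarrow> 'a set" where
  "orth A = {x. \<forall>y\<in>A. cinner x y = 0}"

text \<open>R_m = ker((T-t_m)^{k_m} ... (T-t_1)^{k_1}); R_0 = ker id = {0}.\<close>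
definition Rsp :: "('a::complex_inner \<Rightarrow> 'a) \<Rightarrow> (nat \<Rightarrow> complex) \<Rightarrow> (nat \<Rightarrow> nat) \<Rightarrow> nat \<Rightarrow> 'a set" where
  "Rsp T t k m = {x. prodop T (factors t k (rev [1..<m+1])) x = 0}"

definition Lsp :: "('a::complex_inner \<Rightarrow> 'a) \<Rightarrow> (nat \<Rightarrow> complex) \<Rightarrow> (nat \<Rightarrow> nat) \<Rightarrow> nat \<Rightarrow> 'a set" where
  "Lsp T t k m = Rsp T t k m \<inter> orth (Rsp T t k (m - 1))"

text \<open>M_m = H \<ominus> (L_1 \<oplus> ... \<oplus> L_m), i.e. the orthogonal complement of
the (closed) span of L_1,...,L_m, which equals orth of their union.\<close>
definition Msp :: "('a::complex_inner \<Rightarrow> 'a) \<Rightarrow> (nat \<Rightarrow> complex) \<Rightarrow> (nat \<Rightarrow> nat) \<Rightarrow> nat \<Rightarrow> 'a set" where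
  "Msp T t k m = orth (\<Union>i\<in>{1..m}. Lsp T t k i)"

definition opnorm_on :: "'a::complex_inner set \<Rightarrow> ('a \<Rightarrow> 'a) \<Rightarrow> real" where
  "opnorm_on M S = Sup {norm (S x) | x. x \<in> M \<and> norm x \<le> 1}"

end

theory Submission
  imports Defs
begin

(*
  Call an eigenvalue c of T "dominant" on a T-invariant subspace M if
  \<parallel>T x\<parallel> \<le> \<bar>c\<bar> \<parallel>x\<parallel> on M.  A perturbation argument (z = e + s w, s \<rightarrow> 0) shows that an
  eigenvector e \<in> M for a dominant eigenvalue c is also an eigenvector of the
  compression of T\<^sup>* to M with eigenvalue cnj c.  Consequently, on M:
  generalized c-eigenvectors are eigenvectors, eigenvectors for other eigenvalues
  are orthogonal to the c-eigenspace, and M \<ominus> ker (T - c) is again invariant and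
  contains the range of (T - c)\<^sup>n, n > 0.

  Let P j be the orthogonal complement of ker (T - t\<^sub>1) + ... + ker (T - t\<^sub>j), and call
  m "peelable" if t\<^sub>i is dominant on P (i-1) for all i \<le> m.  For peelable m the
  facts above yield by induction: R\<^sub>j = ker (T - t\<^sub>1) + ... + ker (T - t\<^sub>j),
  L\<^sub>j = ker (T - t\<^sub>j), M\<^sub>j = P j (j \<le> m), P m is invariant and is annihilated by the
  remaining factors.  Taking m maximal peelable, either m = N or t\<^bsub>m+1\<^esub> is not
  dominant on M\<^sub>m, i.e. \<parallel>T|M\<^sub>m\<parallel> > |t\<^bsub>m+1\<^esub>| \<ge> |t\<^sub>i| for i > m; this is the theorem with S = T.
*)

lemma scaleC_zero_right [simp]: "scaleC a (0::'a::complex_vector) = 0"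
  using scaleC_add_right[of a "0::'a" 0] by simp

lemma scaleC_zero_left [simp]: "scaleC 0 (x::'a::complex_vector) = 0"
  using scaleC_add_left[of 0 0 x] by simp

lemma scaleC_minus_left: "scaleC (- a) x = - scaleC a (x::'a::complex_vector)"
  using minus_unique[of "scaleC a x" "scaleC (- a) x"] scaleC_add_left[of a "-a" x] by simp

lemma scaleC_minus_right: "scaleC a (- x) = - scaleC a (x::'a::complex_vector)"
  using minus_unique[of "scaleC a x" "scaleC a (- x)"] scaleC_add_right[of a x "-x"] by simp

lemma scaleC_diff_right: "scaleC a (x - y) = scaleC a x - scaleC a (y::'a::complex_vector)"
  by (metis diff_conv_add_uminus scaleC_add_right scaleC_minus_right)

lemma scaleC_diff_left: "scaleC (a - b) x = scaleC a x - scaleC b (x::'a::complex_vector)"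
  by (metis diff_conv_add_uminus scaleC_add_left scaleC_minus_left)

lemma cinner_add_right: "cinner x (y + z) = cinner x y + cinner x (z::'a::complex_inner)"
  by (metis cinner_add_left cinner_commute complex_cnj_add)

lemma cinner_scaleC_right: "cinner x (scaleC r y) = r * cinner x (y::'a::complex_inner)"
  by (metis cinner_commute cinner_scaleC_left complex_cnj_cnj complex_cnj_mult)

lemma cinner_zero_left [simp]: "cinner 0 (y::'a::complex_inner) = 0"
  using cinner_add_left[of 0 0 y] by simp

lemma cinner_zero_right [simp]: "cinner y (0::'a::complex_inner) = 0"
  using cinner_add_right[of y 0 0] by simp

lemma cinner_diff_left: "cinner (x - z) (y::'a::complex_inner) = cinner x y - cinner z y"
  using cinner_add_left[of "x - z" z y] by simp

lemma cinner_diff_right: "cinner y (x - z) = cinner y x - cinner y (z::'a::complex_inner)"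
  using cinner_add_right[of y "x - z" z] by simp

lemma cinner_sum_right: "cinner x (sum f A) = (\<Sum>i\<in>A. cinner x (f i::'a::complex_inner))"
  by (induction A rule: infinite_finite_induct) (simp_all add: cinner_add_right)

lemma norm_sq_cinner: "(norm x)^2 = Re (cinner x (x::'a::complex_inner))"
  using norm_eq_sqrt_cinner[of x] cinner_ge_zero[of x] by simp

lemma norm_sq_add:
  "(norm (a + b))^2 = (norm a)^2 + 2 * Re (cinner a b) + (norm (b::'a::complex_inner))^2"
proof -
  have "Re (cinner b a) = Re (cinner a b)"
    using cinner_commute[of b a] by simp
  then show ?thesis
    by (simp add: norm_sq_cinner cinner_add_left cinner_add_right)
qed

lemma cnj_mult_self: "cnj c * c = complex_of_real ((cmod c)^2)"
  by (metis complex_norm_square mult.commute of_real_power)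

lemma norm_scaleC: "norm (scaleC c x) = cmod c * norm (x::'a::complex_inner)"
proof -
  have "cinner (scaleC c x) (scaleC c x) = (cnj c * c) * cinner x x"
    by (simp add: cinner_scaleC_left cinner_scaleC_right mult.assoc)
  then have "(norm (scaleC c x))^2 = (cmod c)^2 * (norm x)^2"
    by (simp add: norm_sq_cinner cnj_mult_self)
  also have "\<dots> = (cmod c * norm x)^2"
    by (simp add: power_mult_distrib)
  finally show ?thesis
    by (simp add: power2_eq_iff_nonneg)
qed

text \<open>If \<open>2 s X \<le> s\<^sup>2 Y\<close> for all \<open>s > 0\<close> then \<open>X \<le> 0\<close>: the linear term of a
  perturbation must vanish.\<close>
lemma nonpos_if_linear_le_quadratic:
  fixes X Y :: real
  assumes "\<And>s. s > 0 \<Longrightarrow> 2 * s * X \<le> s^2 * Y"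
  shows "X \<le> 0"
proof (rule ccontr)
  assume "\<not> X \<le> 0"
  then have X: "X > 0" by simp
  define s where "s = X / (\<bar>Y\<bar> + 1)"
  have s: "s > 0" using X by (simp add: s_def)
  have "s * \<bar>Y\<bar> < X"
    using X by (simp add: s_def field_simps)
  have "2 * s * X \<le> s^2 * Y" using assms s by simp
  also have "\<dots> \<le> s * (s * \<bar>Y\<bar>)"
    using s by (simp add: power2_eq_square mult.assoc mult_left_mono)
  also have "\<dots> < s * X"
    using \<open>s * \<bar>Y\<bar> < X\<close> s by simp
  finally show False using s X by simp
qed

definition clinear :: "('a::complex_vector \<Rightarrow> 'b::complex_vector) \<Rightarrow> bool" where
  "clinear f \<longleftrightarrow> (\<forall>x y. f (x + y) = f x + f y) \<and> (\<forall>c x. f (scaleC c x) = scaleC c (f x))"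

lemma clinear_add: "clinear f \<Longrightarrow> f (x + y) = f x + f y"
  by (simp add: clinear_def)

lemma clinear_scaleC: "clinear f \<Longrightarrow> f (scaleC c x) = scaleC c (f x)"
  by (simp add: clinear_def)

lemma clinear_zero: "clinear f \<Longrightarrow> f 0 = 0"
  using clinear_scaleC[of f 0 0] by simp

lemma clinear_diff: "clinear f \<Longrightarrow> f (x - y) = f x - f y"
  using clinear_add[of f "x - y" y] by simp

lemma clinear_sum: "clinear f \<Longrightarrow> f (sum g A) = (\<Sum>i\<in>A. f (g i))"
  by (induction A rule: infinite_finite_induct) (simp_all add: clinear_add clinear_zero)

lemma clinear_comp: "clinear f \<Longrightarrow> clinear g \<Longrightarrow> clinear (f \<circ> g)"
  by (simp add: clinear_def)

lemma clinear_id: "clinear id"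
  by (simp add: clinear_def)

lemma clinear_funpow: "clinear (f :: 'a::complex_vector \<Rightarrow> 'a) \<Longrightarrow> clinear (f ^^ n)"
  by (induction n) (simp_all add: clinear_def)

lemma funpow_commute: "(\<And>x. f (g x) = g (f x)) \<Longrightarrow> (f ^^ n) (g x) = g ((f ^^ n) x)"
  by (induction n) simp_all

lemma shp_Suc: "shp T c (Suc n) x = T (shp T c n x) - scaleC c (shp T c n x)"
  by (simp add: shp_def)

lemma shp_Suc_right: "shp T c (Suc n) x = shp T c n (T x - scaleC c x)"
  by (simp only: shp_def funpow_Suc_right comp_apply)

lemma prodop_append: "prodop T (xs @ ys) = prodop T xs \<circ> prodop T ys"
  by (induction T xs rule: prodop.induct) auto

context
  fixes T :: "'a::complex_vector \<Rightarrow> 'a"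
  assumes T: "clinear T"
begin

lemma clinear_shift: "clinear (\<lambda>x. T x - scaleC c x)"
  by (simp add: clinear_def clinear_add[OF T] clinear_scaleC[OF T] scaleC_add_right
      scaleC_diff_right scaleC_scaleC mult.commute)

lemma clinear_shp: "clinear (shp T c n)"
  unfolding shp_def by (intro clinear_funpow clinear_shift)

lemma clinear_prodop: "clinear (prodop T fs)"
proof (induction fs)
  case Nil then show ?case by (simp only: prodop.simps clinear_id)
next
  case (Cons f fs) then show ?case by (cases f) (simp only: prodop.simps clinear_comp clinear_shp)
qed

text \<open>All shifted powers of \<open>T\<close> are polynomials in \<open>T\<close>, hence they commute.\<close>
lemma shp_commute: "shp T a n (shp T b m x) = shp T b m (shp T a n x)"
proof -
  define D where "D c y = T y - scaleC c y" for c y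
  have shifts: "D a (D b y) = D b (D a y)" for y
    by (simp add: D_def clinear_diff[OF T] clinear_scaleC[OF T] scaleC_diff_right scaleC_scaleC
        mult.commute algebra_simps)
  then have "D a ((D b ^^ m) y) = (D b ^^ m) (D a y)" for y
    by (simp add: funpow_commute)
  then have "(D a ^^ n) ((D b ^^ m) x) = (D b ^^ m) ((D a ^^ n) x)"
    by (rule funpow_commute)
  then show ?thesis
    by (simp add: shp_def D_def[abs_def])
qed

lemma shp_prodop_commute: "shp T a n (prodop T fs x) = prodop T fs (shp T a n x)"
proof (induction fs arbitrary: x)
  case (Cons f fs)
  obtain c m where f: "f = (c, m)" by (cases f)
  show ?case
    by (simp only: f prodop.simps comp_apply shp_commute[of a n c m] Cons.IH)
qed simp

lemma prodop_commute: "prodop T fs (prodop T gs x) = prodop T gs (prodop T fs x)"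
proof (induction fs arbitrary: x)
  case (Cons f fs)
  obtain c m where f: "f = (c, m)" by (cases f)
  show ?case
    by (simp only: f prodop.simps comp_apply Cons.IH shp_prodop_commute)
qed simp

lemma prodop_rev: "prodop T (rev fs) x = prodop T fs x"
proof (induction fs arbitrary: x)
  case (Cons f fs)
  obtain c m where f: "f = (c, m)" by (cases f)
  show ?case
    by (simp add: f prodop_append Cons.IH shp_prodop_commute)
qed simp

lemma prodop_split:
  assumes "m \<le> N"
  shows "prodop T (factors t k (rev [1..<N+1])) x
       = prodop T (factors t k (rev [1..<m+1])) (prodop T (factors t k [m+1..<N+1]) x)"
proof -
  have "[1..<N+1] = [1..<m+1] @ [m+1..<N+1]"
    using upt_add_eq_append[of 1 "m+1" "N-m"] assms by simp
  then have "prodop T (factors t k (rev [1..<N+1])) x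
      = prodop T (factors t k (rev [m+1..<N+1])) (prodop T (factors t k (rev [1..<m+1])) x)"
    by (simp add: factors_def prodop_append)
  also have "\<dots> = prodop T (factors t k [m+1..<N+1]) (prodop T (factors t k (rev [1..<m+1])) x)"
    unfolding factors_def rev_map[symmetric] by (rule prodop_rev)
  finally show ?thesis
    by (simp only: prodop_commute)
qed

end

definition csubspace :: "'a::complex_vector set \<Rightarrow> bool" where
  "csubspace M \<longleftrightarrow> 0 \<in> M \<and> (\<forall>x\<in>M. \<forall>y\<in>M. x + y \<in> M) \<and> (\<forall>c. \<forall>x\<in>M. scaleC c x \<in> M)"

definition invariant_under :: "('a \<Rightarrow> 'a) \<Rightarrow> 'a set \<Rightarrow> bool" where
  "invariant_under T M \<longleftrightarrow> (\<forall>x\<in>M. T x \<in> M)"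

definition eigenspace :: "('a::complex_vector \<Rightarrow> 'a) \<Rightarrow> complex \<Rightarrow> 'a set" where
  "eigenspace T c = {x. T x = scaleC c x}"

definition bounded_on :: "('a::complex_inner \<Rightarrow> 'a) \<Rightarrow> 'a set \<Rightarrow> real \<Rightarrow> bool" where
  "bounded_on T M r \<longleftrightarrow> (\<forall>x\<in>M. norm (T x) \<le> r * norm x)"

lemma csubspace_add: "csubspace M \<Longrightarrow> x \<in> M \<Longrightarrow> y \<in> M \<Longrightarrow> x + y \<in> M"
  by (simp add: csubspace_def)

lemma csubspace_scaleC: "csubspace M \<Longrightarrow> x \<in> M \<Longrightarrow> scaleC c x \<in> M"
  by (simp add: csubspace_def)

lemma csubspace_diff: "csubspace M \<Longrightarrow> x \<in> M \<Longrightarrow> y \<in> M \<Longrightarrow> x - y \<in> M"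
  using csubspace_add[of M x "scaleC (-1) y"] csubspace_scaleC[of M y "-1"]
  by (simp add: scaleC_minus_left scaleC_one)

lemma csubspace_sum: "csubspace M \<Longrightarrow> (\<And>i. i \<in> A \<Longrightarrow> f i \<in> M) \<Longrightarrow> sum f A \<in> M"
  by (induction A rule: infinite_finite_induct) (simp_all add: csubspace_def)

lemma csubspace_orth: "csubspace (orth A)"
  by (simp add: csubspace_def orth_def cinner_add_left cinner_scaleC_left)

lemma csubspace_kernel: "clinear f \<Longrightarrow> csubspace {x. f x = 0}"
  by (simp add: csubspace_def clinear_add clinear_scaleC clinear_zero)

lemma csubspace_eigenspace: "clinear T \<Longrightarrow> csubspace (eigenspace T c)"
  by (simp add: csubspace_def eigenspace_def clinear_add clinear_scaleC clinear_zero
      scaleC_add_right scaleC_scaleC mult.commute)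

lemma csubspace_inter: "csubspace M \<Longrightarrow> csubspace M' \<Longrightarrow> csubspace (M \<inter> M')"
  by (simp add: csubspace_def)

lemma invariant_eigenspace: "clinear T \<Longrightarrow> invariant_under T (eigenspace T c)"
  by (simp add: invariant_under_def eigenspace_def clinear_scaleC)

lemma shp_invariant: "csubspace M \<Longrightarrow> invariant_under T M \<Longrightarrow> x \<in> M \<Longrightarrow> shp T c n x \<in> M"
  by (induction n) (simp_all add: shp_Suc shp_def csubspace_diff csubspace_scaleC invariant_under_def)

lemma prodop_invariant:
  "csubspace M \<Longrightarrow> invariant_under T M \<Longrightarrow> x \<in> M \<Longrightarrow> prodop T fs x \<in> M"
proof (induction fs arbitrary: x)
  case (Cons f fs) then show ?case by (cases f) (simp add: shp_invariant)
qed simp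

lemma shp_eigenvector:
  assumes "clinear T" and "T x = scaleC c' x"
  shows "shp T c n x = scaleC ((c' - c)^n) x"
proof (induction n)
  case 0 then show ?case by (simp add: shp_def scaleC_one)
next
  case (Suc n)
  then show ?case
    using assms by (simp add: shp_Suc clinear_scaleC scaleC_scaleC scaleC_diff_left[symmetric]
        algebra_simps)
qed

lemma prodop_kills_eigenvector:
  assumes T: "clinear T" and x: "x \<in> eigenspace T c" and fac: "(c, n) \<in> set fs" and n: "n > 0"
  shows "prodop T fs x = 0"
proof -
  obtain ys zs where fs: "fs = ys @ (c, n) # zs"
    using split_list[OF fac] by blast
  have "prodop T zs x \<in> eigenspace T c"
    using prodop_invariant[OF csubspace_eigenspace[OF T] invariant_eigenspace[OF T] x] .
  then have "shp T c n (prodop T zs x) = 0"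
    using n by (simp add: eigenspace_def shp_eigenvector[OF T] zero_power)
  then show ?thesis
    by (simp add: fs prodop_append clinear_zero[OF clinear_prodop[OF T]])
qed

section \<open>Dominant eigenvalues on an invariant subspace\<close>

text \<open>Expanding
  \<open>\<parallel>T (e + s\<gamma>w)\<parallel>\<^sup>2 \<le> \<bar>c\<bar>\<^sup>2 \<parallel>e + s\<gamma>w\<parallel>\<^sup>2\<close> gives a linear term in \<open>s\<close> that must vanish.\<close>
lemma dominant_eigenvector_orth:
  assumes T: "clinear T" and M: "csubspace M" and bnd: "bounded_on T M (cmod c)"
    and eM: "e \<in> M" and e: "T e = scaleC c e" and wM: "w \<in> M" and ew: "cinner e w = 0"
  shows "cinner e (T w) = 0"
proof (cases "c = 0")
  case True
  then have "T w = 0" using bnd wM by (simp add: bounded_on_def)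
  then show ?thesis by simp
next
  case False
  define \<beta> where "\<beta> = cinner e (T w)"
  define \<gamma> where "\<gamma> = c * cnj \<beta>"
  define X where "X = (cmod c * cmod \<beta>)^2"
  have "2 * s * X \<le> s^2 * ((cmod \<gamma>)^2 * (cmod c)^2 * (norm w)^2)" if s: "s > 0" for s
  proof -
    define z where "z = e + scaleC (of_real s * \<gamma>) w"
    have "z \<in> M" unfolding z_def using M eM wM by (simp add: csubspace_add csubspace_scaleC)
    then have Tz: "(norm (T z))^2 \<le> (cmod c)^2 * (norm z)^2"
      using bnd by (simp add: bounded_on_def power_mult_distrib[symmetric] power_mono)
    have "cinner (scaleC c e) (scaleC (of_real s * \<gamma>) (T w))
        = of_real s * ((cnj c * c) * (cnj \<beta> * \<beta>))"
      by (simp add: cinner_scaleC_left cinner_scaleC_right \<beta>_def[symmetric] \<gamma>_def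
          algebra_simps)
    then have "Re (cinner (scaleC c e) (scaleC (of_real s * \<gamma>) (T w))) = s * X"
      by (simp add: cnj_mult_self X_def power_mult_distrib)
    then have "(norm (T z))^2 = (cmod c)^2 * (norm e)^2 + 2 * (s * X)
        + (s * cmod \<gamma>)^2 * (norm (T w))^2"
      by (simp add: z_def clinear_add[OF T] clinear_scaleC[OF T] e norm_sq_add norm_scaleC
          norm_mult power_mult_distrib)
    moreover have "(norm z)^2 = (norm e)^2 + (s * cmod \<gamma>)^2 * (norm w)^2"
      by (simp add: z_def norm_sq_add cinner_scaleC_right ew norm_scaleC norm_mult
          power_mult_distrib)
    moreover have "0 \<le> (s * cmod \<gamma>)^2 * (norm (T w))^2"
      by simp
    ultimately have "2 * (s * X) \<le> (cmod c)^2 * ((s * cmod \<gamma>)^2 * (norm w)^2)"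
      using Tz by (simp only: distrib_left)
    then show ?thesis by (simp add: power_mult_distrib algebra_simps)
  qed
  then have "X \<le> 0" by (rule nonpos_if_linear_le_quadratic)
  then show ?thesis using False by (simp add: X_def \<beta>_def)
qed

text \<open>Hence a \<open>c\<close>-eigenvector \<open>e \<in> M\<close> for a dominant \<open>c\<close> is a \<open>cnj c\<close>-eigenvector of
  the compression of the adjoint: \<open>\<langle>T w, e\<rangle> = cnj c \<langle>w, e\<rangle>\<close> for \<open>w \<in> M\<close>.\<close>
lemma dominant_eigenvector_adjoint:
  assumes T: "clinear T" and M: "csubspace M" and bnd: "bounded_on T M (cmod c)"
    and eM: "e \<in> M" and e: "T e = scaleC c e" and wM: "w \<in> M"
  shows "cinner (T w) e = cnj c * cinner w e"
proof (cases "e = 0")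
  case True then show ?thesis by simp
next
  case False
  then have ee: "cinner e e \<noteq> 0" by (simp add: cinner_eq_zero_iff)
  define \<alpha> where "\<alpha> = cinner e w / cinner e e"
  define w' where "w' = w - scaleC \<alpha> e"
  have w'M: "w' \<in> M"
    using M wM eM by (simp add: w'_def csubspace_diff csubspace_scaleC)
  have ew': "cinner e w' = 0"
    using ee by (simp add: w'_def \<alpha>_def cinner_diff_right cinner_scaleC_right)
  have Tw'e: "cinner (T w') e = 0"
    using dominant_eigenvector_orth[OF T M bnd eM e w'M ew'] cinner_commute[of "T w'" e] by simp
  have w'e: "cinner w' e = 0"
    using ew' cinner_commute[of w' e] by simp
  have "T w = T w' + scaleC (\<alpha> * c) e"
    by (simp add: w'_def clinear_diff[OF T] clinear_scaleC[OF T] e scaleC_scaleC)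
  then have "cinner (T w) e = cnj c * (cnj \<alpha> * cinner e e)"
    by (simp add: cinner_add_left cinner_scaleC_left Tw'e)
  also have "cnj \<alpha> * cinner e e = cinner (w' + scaleC \<alpha> e) e"
    by (simp add: cinner_add_left cinner_scaleC_left w'e)
  also have "w' + scaleC \<alpha> e = w"
    by (simp add: w'_def)
  finally show ?thesis .
qed

lemma dominant_generalized_eigenvector:
  assumes T: "clinear T" and M: "csubspace M" and inv: "invariant_under T M"
    and bnd: "bounded_on T M (cmod c)"
  shows "x \<in> M \<Longrightarrow> shp T c n x = 0 \<Longrightarrow> T x = scaleC c x"
proof (induction n arbitrary: x)
  case 0 then show ?case by (simp add: shp_def clinear_zero[OF T])
next
  case (Suc n)
  define y where "y = T x - scaleC c x"
  have yM: "y \<in> M"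
    using Suc.prems M inv by (simp add: y_def csubspace_diff csubspace_scaleC invariant_under_def)
  have "T y = scaleC c y"
    using Suc.IH[OF yM] Suc.prems(2) by (simp add: shp_Suc_right y_def)
  then have "cinner (T x) y = cnj c * cinner x y"
    using dominant_eigenvector_adjoint[OF T M bnd yM _ Suc.prems(1)] by simp
  then have "cinner y y = 0"
    by (simp add: y_def cinner_diff_left cinner_scaleC_left)
  then show ?case by (simp add: cinner_eq_zero_iff y_def)
qed

context
  fixes T :: "'a::complex_inner \<Rightarrow> 'a" and M :: "'a set" and c :: complex
  assumes T: "clinear T" and M: "csubspace M" and inv: "invariant_under T M"
    and bnd: "bounded_on T M (cmod c)" and E: "eigenspace T c \<subseteq> M"
begin

lemma dominant_range_orth:
  assumes w: "w \<in> M" and n: "n > 0"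
  shows "shp T c n w \<in> M \<inter> orth (eigenspace T c)"
proof -
  obtain n' where n': "n = Suc n'" using n by (cases n) auto
  define v where "v = shp T c n' w"
  have vM: "v \<in> M" unfolding v_def using shp_invariant[OF M inv w] .
  have "cinner (T v - scaleC c v) f = 0" if f: "f \<in> eigenspace T c" for f
    using dominant_eigenvector_adjoint[OF T M bnd _ _ vM, of f] f E
    by (auto simp: eigenspace_def cinner_diff_left cinner_scaleC_left)
  moreover have "T v - scaleC c v \<in> M"
    using vM M inv by (simp add: invariant_under_def csubspace_diff csubspace_scaleC)
  ultimately show ?thesis
    by (simp add: n' shp_Suc v_def orth_def)
qed

lemma dominant_complement_invariant: "invariant_under T (M \<inter> orth (eigenspace T c))"
  unfolding invariant_under_def
proof
  fix w assume w: "w \<in> M \<inter> orth (eigenspace T c)"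
  have "T w = shp T c 1 w + scaleC c w" by (simp add: shp_def)
  moreover have "shp T c 1 w \<in> M \<inter> orth (eigenspace T c)"
    using w by (intro dominant_range_orth) auto
  moreover have "csubspace (M \<inter> orth (eigenspace T c))"
    by (rule csubspace_inter[OF M csubspace_orth])
  ultimately show "T w \<in> M \<inter> orth (eigenspace T c)"
    using w by (metis csubspace_add csubspace_scaleC)
qed

lemma dominant_other_eigenvector_orth:
  assumes eM: "e \<in> M" and e: "T e = scaleC c' e" and c': "c' \<noteq> c"
  shows "e \<in> orth (eigenspace T c)"
  unfolding orth_def mem_Collect_eq
proof
  fix f assume f: "f \<in> eigenspace T c"
  have "cnj c' * cinner e f = cnj c * cinner e f"
    using dominant_eigenvector_adjoint[OF T M bnd _ _ eM, of f] f E e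
    by (auto simp: eigenspace_def cinner_scaleC_left)
  then show "cinner e f = 0" using c' by simp
qed

end

lemma opnorm_on_gt:
  assumes T: "clinear T" and K: "\<forall>x. norm (T x) \<le> norm x * K"
    and M: "csubspace M" and nb: "\<not> bounded_on T M r"
  shows "r < opnorm_on M T"
proof -
  obtain x where x: "x \<in> M" and big: "norm (T x) > r * norm x"
    using nb by (auto simp: bounded_on_def not_le)
  then have nx: "norm x > 0"
    using clinear_zero[OF T] by (cases "x = 0") auto
  define y where "y = scaleC (complex_of_real (1 / norm x)) x"
  have y: "y \<in> M" "norm y = 1"
    using csubspace_scaleC[OF M x] nx by (simp_all add: y_def norm_scaleC norm_divide)
  have "r < norm (T x) / norm x" using big nx by (simp add: field_simps)
  also have "\<dots> = norm (T y)"
    using nx by (simp add: y_def clinear_scaleC[OF T] norm_scaleC norm_divide)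
  also have "\<dots> \<le> opnorm_on M T"
    unfolding opnorm_on_def
  proof (rule cSup_upper)
    show "norm (T y) \<in> {norm (T x) |x. x \<in> M \<and> norm x \<le> 1}" using y by auto
    show "bdd_above {norm (T x) |x. x \<in> M \<and> norm x \<le> 1}"
    proof (rule bdd_aboveI)
      fix a assume "a \<in> {norm (T x) |x. x \<in> M \<and> norm x \<le> 1}"
      then obtain z where z: "a = norm (T z)" "norm z \<le> 1" by blast
      have "norm (T z) \<le> norm z * \<bar>K\<bar>"
        using K[rule_format, of z] by (meson abs_ge_self mult_left_mono norm_ge_zero order_trans)
      also have "\<dots> \<le> \<bar>K\<bar>"
        using z(2) by (simp add: mult_left_le_one_le)
      finally show "a \<le> \<bar>K\<bar>" using z(1) by simp
    qed
  qed
  finally show ?thesis .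
qed

section \<open>Peeling off the dominant eigenvalues one at a time\<close>

definition eigsum :: "('a::complex_vector \<Rightarrow> 'a) \<Rightarrow> (nat \<Rightarrow> complex) \<Rightarrow> nat set \<Rightarrow> 'a set" where
  "eigsum T t I = {sum f I | f. \<forall>l\<in>I. f l \<in> eigenspace T (t l)}"

lemma eigsum_subset:
  "csubspace M \<Longrightarrow> (\<And>l. l \<in> I \<Longrightarrow> eigenspace T (t l) \<subseteq> M) \<Longrightarrow> eigsum T t I \<subseteq> M"
  unfolding eigsum_def by (auto intro!: csubspace_sum)

lemma eigsum_insert:
  assumes "finite I" "i \<notin> I" "x \<in> eigenspace T (t i)" "y \<in> eigsum T t I"
  shows "x + y \<in> eigsum T t (insert i I)"
proof -
  obtain f where f: "\<forall>l\<in>I. f l \<in> eigenspace T (t l)" "y = sum f I"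
    using assms(4) by (auto simp: eigsum_def)
  have "sum (f(i := x)) I = sum f I"
    using assms(2) by (intro sum.cong) auto
  then have "x + y = sum (f(i := x)) (insert i I)"
    using assms(1,2) f(2) by simp
  then show ?thesis
    using f(1) assms(2,3) unfolding eigsum_def by (intro CollectI exI[of _ "f(i := x)"]) auto
qed

lemma eigsum_orth: "x \<in> orth (\<Union>l\<in>I. eigenspace T (t l)) \<Longrightarrow> y \<in> eigsum T t I \<Longrightarrow> cinner x y = 0"
  unfolding eigsum_def orth_def by (auto simp: cinner_sum_right intro!: sum.neutral)

text \<open>The standing hypotheses of the theorem, except the ordering of the moduli.\<close>
locale annihilated_operator =
  fixes T :: "'a::complex_inner \<Rightarrow> 'a" and t :: "nat \<Rightarrow> complex" and k :: "nat \<Rightarrow> nat"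
    and N :: nat
  assumes T: "clinear T"
    and T_bounded: "\<exists>K. \<forall>x. norm (T x) \<le> norm x * K"
    and annihilates: "prodop T (factors t k (rev [1..<N+1])) = (\<lambda>x. 0)"
    and t_inj: "inj_on t {1..N}"
    and k_pos: "1 \<le> i \<Longrightarrow> i \<le> N \<Longrightarrow> 0 < k i"
begin

definition perp :: "nat \<Rightarrow> 'a set" where
  "perp j = orth (\<Union>i\<in>{1..j}. eigenspace T (t i))"

definition peelable :: "nat \<Rightarrow> bool" where
  "peelable m \<longleftrightarrow> (\<forall>i\<in>{1..m}. bounded_on T (perp (i - 1)) (cmod (t i)))"

lemma perp_0: "perp 0 = UNIV"
  by (simp add: perp_def orth_def)

lemma perp_Suc: "perp (Suc j) = perp j \<inter> orth (eigenspace T (t (Suc j)))"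
  by (auto simp: perp_def orth_def atLeastAtMostSuc_conv)

lemma perp_antimono: "i \<le> j \<Longrightarrow> perp j \<subseteq> perp i"
  by (auto simp: perp_def orth_def)

lemma csubspace_perp: "csubspace (perp j)"
  by (simp add: perp_def csubspace_orth)

lemma peelable_Suc: "peelable (Suc j) \<longleftrightarrow> peelable j \<and> bounded_on T (perp j) (cmod (t (Suc j)))"
  by (auto simp: peelable_def atLeastAtMostSuc_conv)

lemma peelable_le: "peelable m \<Longrightarrow> j \<le> m \<Longrightarrow> peelable j"
  by (auto simp: peelable_def)

lemma peelable_bounded: "peelable j \<Longrightarrow> i < j \<Longrightarrow> bounded_on T (perp i) (cmod (t (Suc i)))"
  unfolding peelable_def by (drule bspec[of _ _ "Suc i"]) auto

lemma peelable_perp: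
  "peelable j \<Longrightarrow> j \<le> N \<Longrightarrow>
     invariant_under T (perp j) \<and> (\<forall>l. j < l \<and> l \<le> N \<longrightarrow> eigenspace T (t l) \<subseteq> perp j)"
proof (induction j)
  case 0 then show ?case by (simp add: perp_0 invariant_under_def)
next
  case (Suc j)
  then have inv: "invariant_under T (perp j)"
    and E: "\<And>l. j < l \<Longrightarrow> l \<le> N \<Longrightarrow> eigenspace T (t l) \<subseteq> perp j"
    and bnd: "bounded_on T (perp j) (cmod (t (Suc j)))"
    by (auto simp: peelable_Suc)
  note dom = csubspace_perp inv bnd E[of "Suc j"]
  have "eigenspace T (t l) \<subseteq> perp (Suc j)" if l: "Suc j < l" "l \<le> N" for l
  proof -
    have "t l \<noteq> t (Suc j)" using l inj_onD[OF t_inj] by fastforce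
    then show ?thesis
      using dominant_other_eigenvector_orth[OF T dom] E[of l] l Suc.prems
      by (auto simp: perp_Suc eigenspace_def)
  qed
  moreover have "invariant_under T (perp (Suc j))"
    using dominant_complement_invariant[OF T dom] Suc.prems by (simp add: perp_Suc)
  ultimately show ?case by blast
qed

lemma eigenspace_perp: "peelable j \<Longrightarrow> i < l \<Longrightarrow> i \<le> j \<Longrightarrow> l \<le> N \<Longrightarrow> eigenspace T (t l) \<subseteq> perp i"
  using peelable_perp[OF peelable_le] by simp

lemma eigsum_perp:
  "peelable j \<Longrightarrow> i \<le> j \<Longrightarrow> j \<le> N \<Longrightarrow> eigsum T t {Suc i..j} \<subseteq> perp i"
  by (intro eigsum_subset csubspace_perp eigenspace_perp) auto

lemma eigsum_shp_preimage:
  assumes u: "u \<in> eigsum T t I" and c: "\<And>l. l \<in> I \<Longrightarrow> t l \<noteq> c"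
  shows "\<exists>h\<in>eigsum T t I. shp T c n h = u"
proof -
  obtain g where g: "\<forall>l\<in>I. g l \<in> eigenspace T (t l)" and ug: "u = sum g I"
    using u by (auto simp: eigsum_def)
  define h where "h l = scaleC (inverse ((t l - c)^n)) (g l)" for l
  have "h l \<in> eigenspace T (t l)" if "l \<in> I" for l
    using g that csubspace_scaleC[OF csubspace_eigenspace[OF T]] by (simp add: h_def)
  moreover have "shp T c n (h l) = g l" if "l \<in> I" for l
    using g that c[OF that]
    by (simp add: h_def eigenspace_def clinear_scaleC[OF clinear_shp[OF T]]
        shp_eigenvector[OF T] scaleC_scaleC scaleC_one)
  ultimately show ?thesis
    by (intro bexI[of _ "sum h I"]) (auto simp: ug clinear_sum[OF clinear_shp[OF T]] eigsum_def)
qed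

lemma peelable_kernel_decomp:
  assumes pj: "peelable j" and jN: "j \<le> N"
  shows "1 \<le> i \<Longrightarrow> i \<le> Suc j \<Longrightarrow> w \<in> perp (i - 1) \<Longrightarrow>
    prodop T (factors t k (rev [i..<Suc j])) w = 0 \<Longrightarrow> w \<in> eigsum T t {i..j}"
proof (induction "Suc j - i" arbitrary: i w)
  case 0
  then show ?case by (simp add: factors_def eigsum_def)
next
  case (Suc d)
  then obtain i' where i': "i = Suc i'" "i' < j" by (cases i) auto
  have iN: "1 \<le> i" "i \<le> N" using i' jN by auto
  have w: "w \<in> perp i'" using Suc.prems(3) i' by simp
  have inv: "invariant_under T (perp i')"
    using peelable_perp[OF peelable_le[OF pj], of i'] i' jN by simp
  have bnd: "bounded_on T (perp i') (cmod (t i))"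
    using peelable_bounded[OF pj] i' by simp
  have E: "eigenspace T (t i) \<subseteq> perp i'"
    using eigenspace_perp[OF pj, of i' i] i' jN by simp
  note dom = csubspace_perp inv bnd E
  define u where "u = shp T (t i) (k i) w"
  have "rev [i..<Suc j] = rev [Suc i..<Suc j] @ [i]"
    using i' by (simp add: upt_conv_Cons del: upt_Suc)
  then have "prodop T (factors t k (rev [Suc i..<Suc j])) u = 0"
    using Suc.prems(4) by (simp add: factors_def prodop_append u_def del: upt_Suc)
  moreover have "u \<in> perp i"
    using dominant_range_orth[OF T dom w k_pos[OF iN]] i' by (simp add: u_def perp_Suc)
  ultimately have "u \<in> eigsum T t {Suc i..j}"
    using Suc.hyps i' by simp
  moreover have "t l \<noteq> t i" if "l \<in> {Suc i..j}" for l
    using that iN jN inj_onD[OF t_inj, of l i] by auto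
  ultimately obtain h where h: "h \<in> eigsum T t {Suc i..j}" and hu: "shp T (t i) (k i) h = u"
    using eigsum_shp_preimage by blast
  have hP: "h \<in> perp i'"
    using h eigsum_perp[OF pj, of i] perp_antimono[of i' i] i' jN by auto
  have "T (w - h) = scaleC (t i) (w - h)"
  proof (rule dominant_generalized_eigenvector[OF T csubspace_perp inv bnd])
    show "w - h \<in> perp i'" using w hP by (simp add: csubspace_diff[OF csubspace_perp])
    show "shp T (t i) (k i) (w - h) = 0"
      by (simp add: clinear_diff[OF clinear_shp[OF T]] hu u_def)
  qed
  then have "(w - h) + h \<in> eigsum T t (insert i {Suc i..j})"
    using h i' by (intro eigsum_insert) (auto simp: eigenspace_def)
  moreover have "insert i {Suc i..j} = {i..j}" using i' by auto
  ultimately show ?case by simp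
qed

lemma eigenspace_Rsp: "l \<in> {1..j} \<Longrightarrow> j \<le> N \<Longrightarrow> eigenspace T (t l) \<subseteq> Rsp T t k j"
proof
  fix x assume l: "l \<in> {1..j}" and jN: "j \<le> N" and x: "x \<in> eigenspace T (t l)"
  have "(t l, k l) \<in> set (factors t k (rev [1..<j+1]))"
    unfolding factors_def set_map set_rev set_upt using l by auto
  then show "x \<in> Rsp T t k j"
    using prodop_kills_eigenvector[OF T x] k_pos l jN by (auto simp: Rsp_def)
qed

lemma Rsp_eq_eigsum:
  assumes pj: "peelable j" and jN: "j \<le> N"
  shows "Rsp T t k j = eigsum T t {1..j}"
proof
  show "Rsp T t k j \<subseteq> eigsum T t {1..j}"
    using peelable_kernel_decomp[OF pj jN, of 1] by (auto simp: Rsp_def perp_0)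
  show "eigsum T t {1..j} \<subseteq> Rsp T t k j"
    using eigenspace_Rsp jN
    by (intro eigsum_subset) (simp_all add: Rsp_def csubspace_kernel[OF clinear_prodop[OF T]])
qed

lemma Lsp_eq_eigenspace:
  assumes pj: "peelable j" and jN: "j \<le> N" and j: "1 \<le> j"
  shows "Lsp T t k j = eigenspace T (t j)"
proof -
  obtain j' where j': "j = Suc j'" using j by (cases j) auto
  have E: "eigenspace T (t j) \<subseteq> perp j'"
    using eigenspace_perp[OF pj, of j' j] j' jN by simp
  have R: "Rsp T t k j' = eigsum T t {1..j'}"
    using Rsp_eq_eigsum[OF peelable_le[OF pj]] j' jN by simp
  have orthR: "cinner e r = 0" if "e \<in> perp j'" "r \<in> Rsp T t k j'" for e r
    using that eigsum_orth R by (simp add: perp_def)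
  show ?thesis
  proof
    show "eigenspace T (t j) \<subseteq> Lsp T t k j"
      using eigenspace_Rsp[of j j] jN j E orthR j' by (auto simp: Lsp_def orth_def)
  next
    show "Lsp T t k j \<subseteq> eigenspace T (t j)"
    proof
      fix x assume x: "x \<in> Lsp T t k j"
      then obtain f where f: "\<forall>l\<in>{1..j}. f l \<in> eigenspace T (t l)" and xf: "x = sum f {1..j}"
        using Rsp_eq_eigsum[OF pj jN] by (auto simp: Lsp_def eigsum_def)
      define r where "r = sum f {1..j'}"
      have xr: "x = r + f j" by (simp add: xf r_def j')
      have rR: "r \<in> Rsp T t k j'"
        using f j' R by (auto simp: r_def eigsum_def)
      have "f j \<in> perp j'"
        using f E j by auto
      then have "cinner (f j) r = 0"
        using orthR[OF _ rR] by simp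
      moreover have "cinner x r = 0"
        using x rR by (simp add: Lsp_def orth_def j')
      ultimately have "cinner r r = 0"
        using xr by (simp add: cinner_add_left)
      then show "x \<in> eigenspace T (t j)"
        using f xr j by (simp add: cinner_eq_zero_iff)
    qed
  qed
qed

lemma Msp_eq_perp: "peelable m \<Longrightarrow> m \<le> N \<Longrightarrow> Msp T t k m = perp m"
  using Lsp_eq_eigenspace[OF peelable_le] by (simp add: Msp_def perp_def)

text \<open>The remaining factors annihilate \<open>perp m\<close>: their image is an invariant
  subspace of \<open>perp m\<close> inside \<open>R\<^sub>m\<close>, which is orthogonal to \<open>perp m\<close>.\<close>
lemma perp_annihilated:
  assumes pm: "peelable m" and mN: "m \<le> N" and x: "x \<in> perp m"
  shows "prodop T (factors t k [m+1..<N+1]) x = 0"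
proof -
  define y where "y = prodop T (factors t k [m+1..<N+1]) x"
  have "y \<in> perp m"
    using prodop_invariant[OF csubspace_perp _ x] peelable_perp[OF pm mN] by (simp add: y_def)
  moreover have "y \<in> eigsum T t {1..m}"
    using annihilates prodop_split[OF T mN] Rsp_eq_eigsum[OF pm mN]
    by (auto simp: y_def Rsp_def fun_eq_iff)
  ultimately have "cinner y y = 0"
    using eigsum_orth by (simp add: perp_def)
  then show ?thesis by (simp add: cinner_eq_zero_iff y_def)
qed

lemma maximal_peelable:
  "\<exists>m\<le>N. peelable m \<and> (m < N \<longrightarrow> cmod (t (Suc m)) < opnorm_on (perp m) T)"
proof -
  define m where "m = Max {m. m \<le> N \<and> peelable m}"
  have fin: "finite {m. m \<le> N \<and> peelable m}" by simp
  have "0 \<in> {m. m \<le> N \<and> peelable m}" by (simp add: peelable_def)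
  then have "m \<in> {m. m \<le> N \<and> peelable m}"
    unfolding m_def using fin by (intro Max_in) auto
  then have m: "m \<le> N" "peelable m" by simp_all
  have "\<not> bounded_on T (perp m) (cmod (t (Suc m)))" if "m < N"
  proof
    assume "bounded_on T (perp m) (cmod (t (Suc m)))"
    then have "Suc m \<in> {m. m \<le> N \<and> peelable m}"
      using that m by (simp add: peelable_Suc)
    then show False
      using Max_ge[OF fin] by (fastforce simp: m_def)
  qed
  then show ?thesis
    using m T_bounded opnorm_on_gt[OF T _ csubspace_perp] by blast
qed

end

theorem mainTheorem7:
  fixes T :: "'a::chilbert \<Rightarrow> 'a"
    and t :: "nat \<Rightarrow> complex" and k :: "nat \<Rightarrow> nat" and N :: nat
  assumes "bounded_clinear T"
    and "prodop T (factors t k (rev [1..<N+1])) = (\<lambda>x. 0)"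
    and "inj_on t {1..N}"
    and "\<And>i j. 1 \<le> i \<Longrightarrow> i \<le> j \<Longrightarrow> j \<le> N \<Longrightarrow> norm (t j) \<le> norm (t i)"
    and "\<And>i. 1 \<le> i \<Longrightarrow> i \<le> N \<Longrightarrow> 0 < k i"
  shows "\<exists>m \<le> N.
           (\<forall>i\<in>{1..m}. \<forall>x\<in>Lsp T t k i. T x = scaleC (t i) x) \<and>
           (\<forall>x\<in>Msp T t k m. T x \<in> Msp T t k m) \<and>
           (\<exists>S :: 'a \<Rightarrow> 'a. (\<forall>x\<in>Msp T t k m. S x = T x) \<and>
              (\<forall>x\<in>Msp T t k m. prodop S (factors t k [m+1..<N+1]) x = 0) \<and>
              (\<forall>i\<in>{m+1..N}. opnorm_on (Msp T t k m) S > norm (t i)))"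
proof -
  interpret annihilated_operator T t k N
    using assms(1-3,5) by unfold_locales (auto simp: bounded_clinear_def clinear_def)
  obtain m where mN: "m \<le> N" and pm: "peelable m"
    and gap: "m < N \<Longrightarrow> cmod (t (Suc m)) < opnorm_on (perp m) T"
    using maximal_peelable by blast
  have M: "Msp T t k m = perp m" using Msp_eq_perp[OF pm mN] .
  have "norm (t i) < opnorm_on (Msp T t k m) T" if "i \<in> {m+1..N}" for i
    using gap assms(4)[of "Suc m" i] that by (force simp: M)
  moreover have "T x = scaleC (t i) x" if "i \<in> {1..m}" "x \<in> Lsp T t k i" for i x
    using that Lsp_eq_eigenspace[OF peelable_le[OF pm]] mN by (auto simp: eigenspace_def)
  ultimately show ?thesis
    using mN M peelable_perp[OF pm mN] perp_annihilated[OF pm mN]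
    by (intro exI[of _ m] conjI exI[of _ T]) (auto simp: invariant_under_def)
qed

end
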